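(* Let $\delta\in[\frac{\sqrt2}{2},1)$ and $p\in(0,1)$. If $\delta\le 1-(6-4\sqrt2)p$, then $$(1+\delta)2^{\frac p2-1}\Big(\frac{g(p)}{1-\delta}\Big)^{p/2}<1,$$ where $g(p)=\frac{p}{2}(1-\frac{p}{2})^{\frac{2}{p}-1}$. *)

theory Defs
  imports Complex_Main
begin

definition g :: "real \<Rightarrow> real" where
  "g p = (p / 2) * (1 - p / 2) powr (2 / p - 1)"

end

theory Submission
  imports Defs
begin

text \<open>Write \<open>q = p/2\<close>, \<open>e = 1 - \<delta>\<close> and \<open>c = 12 - 8\<surd>2\<close>, so that the hypothesis reads \<open>c q \<le> e\<close>.
  The logarithm of the left-hand side is
  \<open>ln (2 - e) - ln 2 + q ln 2 + q ln q + (1 - q) ln (1 - q) - q ln e\<close>,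
  which decreases in \<open>e\<close>; at the extreme gap \<open>e = c q\<close> it collapses to
  \<open>ln (1 - c q/2) + q ln (2/c) + (1 - q) ln (1 - q)\<close>. Since \<open>\<delta> \<ge> \<surd>2/2\<close> forces
  \<open>q \<le> (2 + \<surd>2)/8 < 0.427\<close>, third-order Taylor bounds for \<open>ln (1 - x)\<close> and
  \<open>ln (2/c) \<le> 1.08\<close> reduce negativity of this to a cubic inequality in \<open>q\<close>.\<close>

lemma ln_one_minus_le_cubic:
  fixes x :: real
  assumes "0 \<le> x" "x < 1"
  shows "ln (1 - x) \<le> - x - x^2/2 - x^3/3"
proof -
  let ?h = "\<lambda>t::real. ln (1 - t) + t + t^2/2 + t^3/3"
  have "?h x \<le> ?h 0"
  proof (rule DERIV_nonpos_imp_nonincreasing[OF assms(1)])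
    fix t assume t: "0 \<le> t" "t \<le> x"
    hence t1: "t < 1" using assms by simp
    have "DERIV ?h t :> (-1/(1-t) + 1 + t + t^2)"
      using t1 by (auto intro!: derivative_eq_intros simp: power2_eq_square field_simps)
    moreover have "-1/(1-t) + 1 + t + t^2 = - (t^3) / (1-t)"
      using t1 by (simp add: field_simps power2_eq_square power3_eq_cube)
    moreover have "- (t^3) / (1-t) \<le> 0" using t t1 by simp
    ultimately show "\<exists>y. DERIV ?h t :> y \<and> y \<le> 0" by auto
  qed
  thus ?thesis by simp
qed

lemma sqrt_2_bounds: "1.4142 \<le> sqrt (2::real)" "sqrt (2::real) \<le> 1.41422"
proof -
  show "1.4142 \<le> sqrt (2::real)" by (rule real_le_rsqrt) (simp add: power2_eq_square)
  have "sqrt (2::real) \<le> sqrt (1.41422^2)" by (subst real_sqrt_le_iff) (simp add: power2_eq_square)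
  thus "sqrt (2::real) \<le> 1.41422" by simp
qed

lemma exp_1_08_ge: "(2.9145::real) \<le> exp 1.08"
proof -
  have "exp (1.08::real) = exp 0.135 ^ 8"
    by (subst exp_of_nat_mult[symmetric]) simp
  moreover have "(1.1441125::real) ^ 8 \<le> exp 0.135 ^ 8"
    using exp_lower_Taylor_quadratic[of "0.135::real"]
    by (intro power_mono) (simp_all add: power2_eq_square)
  moreover have "(2.9145::real) \<le> 1.1441125 ^ 8" by (simp add: numeral_eq_Suc)
  ultimately show ?thesis by linarith
qed

lemma ln_two_div_le: "ln (2 / (12 - 8 * sqrt 2)) \<le> (1.08::real)"
proof -
  have c: "0.68624 \<le> 12 - 8 * sqrt (2::real)" using sqrt_2_bounds by simp
  hence "2 / (12 - 8 * sqrt 2) \<le> (2.9145::real)" by (simp add: divide_le_eq)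
  hence "ln (2 / (12 - 8 * sqrt 2)) \<le> ln (exp (1.08::real))"
    using exp_1_08_ge c by (intro ln_mono) auto
  thus ?thesis by simp
qed

lemma g_pos:
  fixes p :: real
  assumes "0 < p" "p < 2"
  shows "0 < g p"
  using assms by (simp add: g_def)

lemma ln_g:
  fixes p :: real
  assumes "0 < p" "p < 2"
  shows "ln (g p) = ln (p/2) + (2/p - 1) * ln (1 - p/2)"
proof -
  have "ln (g p) = ln (p/2) + ln ((1 - p/2) powr (2/p - 1))"
    unfolding g_def using assms by (intro ln_mult_pos) auto
  thus ?thesis using assms by (simp add: ln_powr)
qed

lemma ln_lhs_eq:
  fixes \<delta> p :: real
  assumes "0 < \<delta>" "\<delta> < 1" "0 < p" "p < 1"
  shows "ln ((1 + \<delta>) * 2 powr (p / 2 - 1) * (g p / (1 - \<delta>)) powr (p / 2))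
    = ln (1 + \<delta>) - ln 2 + p/2 * ln 2 + p/2 * ln (p/2) + (1 - p/2) * ln (1 - p/2)
      - p/2 * ln (1 - \<delta>)"
proof -
  have "ln ((1 + \<delta>) * 2 powr (p / 2 - 1) * (g p / (1 - \<delta>)) powr (p / 2))
      = ln (1 + \<delta>) + (p/2 - 1) * ln 2 + p/2 * (ln (g p) - ln (1 - \<delta>))"
    using assms g_pos[of p] by (simp add: ln_mult_pos ln_powr ln_div)
  moreover have "p/2 * ln (g p) = p/2 * ln (p/2) + (1 - p/2) * ln (1 - p/2)"
    using assms by (simp add: ln_g field_simps)
  ultimately show ?thesis by (simp add: algebra_simps)
qed

lemma ln_lhs_le_at_min_gap:
  fixes q c e :: real
  assumes "0 < q" "q < 1" "0 < c" "c * q \<le> e" "e < 2"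
  shows "ln (2 - e) - ln 2 + q * ln 2 + q * ln q + (1 - q) * ln (1 - q) - q * ln e
    \<le> ln (1 - c*q/2) + q * ln (2/c) + (1 - q) * ln (1 - q)"
proof -
  have cq: "0 < c * q" using assms by simp
  hence e_pos: "0 < e" using assms by linarith
  have "ln (2 - e) \<le> ln (2 - c*q)" using assms by (intro ln_mono) auto
  also have "\<dots> = ln (2 * (1 - c*q/2))" by simp
  also have "\<dots> = ln 2 + ln (1 - c*q/2)" using assms by (intro ln_mult_pos) auto
  finally have gap: "ln (2 - e) \<le> ln 2 + ln (1 - c*q/2)" .
  have "q * ln (c*q) \<le> q * ln e" using assms cq e_pos by (intro mult_left_mono) auto
  moreover have "q * ln (c*q) = q * ln 2 - q * ln (2/c) + q * ln q"
    using assms by (simp add: ln_mult_pos ln_div algebra_simps)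
  ultimately show ?thesis using gap by linarith
qed

lemma ln_lhs_at_min_gap_neg:
  fixes q :: real
  defines "c \<equiv> 12 - 8 * sqrt 2"
  assumes "0 < q" "q \<le> 0.427"
  shows "ln (1 - c*q/2) + q * ln (2/c) + (1 - q) * ln (1 - q) < 0"
proof -
  have cb: "0.68624 \<le> c" "c \<le> 0.6864" using sqrt_2_bounds unfolding c_def by auto
  have "c * q \<le> 0.6864 * 0.427" using cb assms by (intro mult_mono) auto
  hence "ln (1 - c*q/2) \<le> - (c*q/2) - (c*q/2)^2/2 - (c*q/2)^3/3"
    using cb assms by (intro ln_one_minus_le_cubic) auto
  also have "\<dots> \<le> - (0.68624*q/2) - (0.68624*q/2)^2/2"
  proof -
    have lo: "0.68624*q/2 \<le> c*q/2" using cb assms by simp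
    hence "(0.68624*q/2)^2 \<le> (c*q/2)^2" using assms by (intro power_mono) auto
    moreover have "0 \<le> (c*q/2)^3" using cb assms by simp
    ultimately show ?thesis using lo by linarith
  qed
  finally have first: "ln (1 - c*q/2) \<le> - (0.68624*q/2) - (0.68624*q/2)^2/2" .
  have "q * ln (2/c) \<le> q * 1.08"
    using ln_two_div_le assms unfolding c_def by (intro mult_left_mono) auto
  moreover have "(1 - q) * ln (1 - q) \<le> (1 - q) * (- q - q^2/2 - q^3/3)"
    using assms by (intro mult_left_mono ln_one_minus_le_cubic) auto
  moreover have "q * (- 0.26312 + 0.4411343328 * q + q^2/6 + q^3/3) < 0"
  proof -
    have "q^2 \<le> 0.427^2" "q^3 \<le> 0.427^3" using assms by (intro power_mono; simp)+
    hence "- 0.26312 + 0.4411343328 * q + q^2/6 + q^3/3 < (0::real)"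
      using assms by (simp add: power2_eq_square power3_eq_cube)
    thus ?thesis using assms by (simp add: mult_pos_neg)
  qed
  moreover have "- (0.68624*q/2) - (0.68624*q/2)^2/2 + q * 1.08 + (1 - q) * (- q - q^2/2 - q^3/3)
      = q * (- 0.26312 + 0.4411343328 * q + q^2/6 + q^3/3)"
    by (simp add: power2_eq_square power3_eq_cube field_simps)
  ultimately show ?thesis using first by linarith
qed

theorem lemma2:
  fixes \<delta> p :: real
  assumes "sqrt 2 / 2 \<le> \<delta>" and "\<delta> < 1"
    and "0 < p" and "p < 1"
    and "\<delta> \<le> 1 - (6 - 4 * sqrt 2) * p"
  shows "(1 + \<delta>) * 2 powr (p / 2 - 1) * (g p / (1 - \<delta>)) powr (p / 2) < 1"
proof -
  define q where "q = p / 2"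
  define c :: real where "c = 12 - 8 * sqrt 2"
  have "0 < sqrt (2::real) / 2" by simp
  hence \<delta>_pos: "0 < \<delta>" using assms(1) by linarith
  have c_pos: "0.68624 \<le> c" using sqrt_2_bounds unfolding c_def by simp
  have gap: "c * q \<le> 1 - \<delta>" using assms(5) unfolding c_def q_def by (simp add: algebra_simps)
  have q_pos: "0 < q" using assms(3) unfolding q_def by simp
  have "c * q \<le> 1 - sqrt 2 / 2" using gap assms(1) by linarith
  moreover have "0.68624 * q \<le> c * q" using c_pos q_pos by (intro mult_right_mono) auto
  moreover have "1 - sqrt 2 / 2 \<le> 1 - 1.4142 / (2::real)" using sqrt_2_bounds(1) by simp
  ultimately have "0.68624 * q \<le> 1 - 1.4142 / 2" by linarith
  hence q_small: "q \<le> 0.427" by simp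
  have "ln ((1 + \<delta>) * 2 powr (p / 2 - 1) * (g p / (1 - \<delta>)) powr (p / 2))
      = ln (2 - (1 - \<delta>)) - ln 2 + q * ln 2 + q * ln q + (1 - q) * ln (1 - q) - q * ln (1 - \<delta>)"
    using ln_lhs_eq[OF \<delta>_pos assms(2-4)] unfolding q_def by simp
  also have "\<dots> \<le> ln (1 - c*q/2) + q * ln (2/c) + (1 - q) * ln (1 - q)"
    using gap c_pos \<delta>_pos assms(3,4) unfolding q_def by (intro ln_lhs_le_at_min_gap) auto
  also have "\<dots> < 0"
    using q_small q_pos unfolding c_def by (intro ln_lhs_at_min_gap_neg)
  finally have "ln ((1 + \<delta>) * 2 powr (p / 2 - 1) * (g p / (1 - \<delta>)) powr (p / 2)) < 0" .
  moreover have "0 < (1 + \<delta>) * 2 powr (p / 2 - 1) * (g p / (1 - \<delta>)) powr (p / 2)"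
    using \<delta>_pos assms(2-4) g_pos[of p] by simp
  ultimately show ?thesis by simp
qed

end
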